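(* Let $V$ be a finite totally ordered set and let $w$ be a derangement of $V$. Then the number $f(w)$ of simple graphs $G$ with vertex set $V$ such that $w \in \mathcal{D}(G)$ is $$f(w) = 2^{\binom{|V|}{2} - \sum_{t \in U(w)} |\rho_w(t)|} \cdot \prod_{t \in U(w)} \left(2^{|\rho_w(t)|} - 1\right) = 2^{\binom{|V|}{2}} \cdot \prod_{t \in U(w)} \left(1 - \frac{1}{2^{|\rho_w(t)|}}\right),$$ and consequently $r(w) = f(w)/2^{\binom{|V|}{2}} = \prod_{t \in U(w)} \left(1 - 2^{-|\rho_w(t)|}\right)$.
   Context: A derangement of $V$ is a fixed-point-free permutation of $V$. For a permutation $w$ of $V$ and $t \in V$, define $\rho_w(t) = \{t, w(t), \ldots, w^{k-1}(t)\}$, where $k$ is the smallest positive integer with $w^k(t) \le t$, and define $\lambda_w(t) = w^{-\ell}(t)$, where $\ell$ is the smallest positive integer with $w^{-\ell}(t) \le t$. For a simple graph $G$ with (totally ordered) vertex set $V$, the derangement set $\mathcal{D}(G)$ is the set of permutations $w$ of $V$ such that for every vertex $t$, the vertex $\lambda_w(t)$ is adjacent in $G$ to some vertex of $\rho_w(t)$. The frequency $f(w)$ is the number of simple graphs $G$ on vertex set $V$ with $w \in \mathcal{D}(G)$, and the rate is $r(w) = f(w)/2^{\binom{|V|}{2}}$. $U(w)$ denotes the set of elements of $V$ that are not the minimal element of their $w$-cycle. *)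

theory Defs
  imports Complex_Main "HOL-Combinatorics.Permutations"
begin

definition derangement :: "'a set \<Rightarrow> ('a \<Rightarrow> 'a) \<Rightarrow> bool" where
  "derangement V w \<longleftrightarrow> w permutes V \<and> (\<forall>x\<in>V. w x \<noteq> x)"

definition rho :: "('a::linorder \<Rightarrow> 'a) \<Rightarrow> 'a \<Rightarrow> 'a set" where
  "rho w t = {(w ^^ i) t | i. i < (LEAST k. 0 < k \<and> (w ^^ k) t \<le> t)}"

definition lam :: "('a::linorder \<Rightarrow> 'a) \<Rightarrow> 'a \<Rightarrow> 'a" where
  "lam w t = ((inv w) ^^ (LEAST l. 0 < l \<and> ((inv w) ^^ l) t \<le> t)) t"

definition all_edges :: "'a set \<Rightarrow> 'a set set" where
  "all_edges V = {e. e \<subseteq> V \<and> card e = 2}"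

definition simple_graph :: "'a set \<Rightarrow> 'a set set \<Rightarrow> bool" where
  "simple_graph V E \<longleftrightarrow> E \<subseteq> all_edges V"

definition adjacent :: "'a set set \<Rightarrow> 'a \<Rightarrow> 'a \<Rightarrow> bool" where
  "adjacent E u v \<longleftrightarrow> {u, v} \<in> E"

definition derangement_set :: "'a::linorder set \<Rightarrow> 'a set set \<Rightarrow> ('a \<Rightarrow> 'a) set" where
  "derangement_set V E = {w. w permutes V \<and>
      (\<forall>t\<in>V. \<exists>x\<in>rho w t. adjacent E (lam w t) x)}"

definition freq :: "'a::linorder set \<Rightarrow> ('a \<Rightarrow> 'a) \<Rightarrow> nat" where
  "freq V w = card {E. simple_graph V E \<and> w \<in> derangement_set V E}"

definition rate :: "'a::linorder set \<Rightarrow> ('a \<Rightarrow> 'a) \<Rightarrow> real" where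
  "rate V w = real (freq V w) / 2 ^ (card V choose 2)"

definition U :: "'a::linorder set \<Rightarrow> ('a \<Rightarrow> 'a) \<Rightarrow> 'a set" where
  "U V w = {t\<in>V. \<exists>n. (w ^^ n) t < t}"

end

theory Submission
  imports Defs "HOL-Library.Disjoint_Sets"
begin

text \<open>For t in U(w), consider the edges {lam w t, x} with x in rho w t. Going
  backwards from t one meets only elements above t before reaching lam w t < t, and rho w t
  consists of t followed by elements above t; hence these are |rho w t| genuine edges, and
  these edge sets are pairwise disjoint: two points of U with the same lam whose rho-segments
  meet would lie on one segment, forcing the lam of the later one into the earlier segment.
  If t is the minimum of its cycle, then lam w (w t) = t = lam w t and
  rho w (w t) \<subseteq> rho w t, so its condition follows from that of w t \<in> U(w). Thus
  w \<in> D(G) iff the edge set of G meets every one of them, and counting such edge sets factor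
  by factor gives the formula.\<close>

lemma card_subsets_meeting:
  assumes "finite A" "S \<subseteq> A"
  shows "card {E. E \<subseteq> A \<and> E \<inter> S \<noteq> {} \<and> P (E - S)}
           = (2 ^ card S - 1) * card {E. E \<subseteq> A - S \<and> P E}"
proof -
  let ?X = "{E. E \<subseteq> A \<and> E \<inter> S \<noteq> {} \<and> P (E - S)}"
  let ?Y = "(Pow S - {{}}) \<times> {E. E \<subseteq> A - S \<and> P E}"
  have "Y \<union> Z - S = Z" if "Y \<subseteq> S" "Z \<subseteq> A - S" for Y Z
    using that by blast
  then have "bij_betw (\<lambda>E. (E \<inter> S, E - S)) ?X ?Y"
    using assms(2) by (intro bij_betw_byWitness[where f' = "\<lambda>(Y, Z). Y \<union> Z"]) auto
  then have "card ?X = card ?Y"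
    by (rule bij_betw_same_card)
  also have "\<dots> = (2 ^ card S - 1) * card {E. E \<subseteq> A - S \<and> P E}"
    using assms rev_finite_subset[of A S]
    by (simp add: card_cartesian_product card_Pow card_Diff_singleton)
  finally show ?thesis .
qed

lemma card_subsets_meeting_disjoint_family:
  assumes "finite I" "finite A" "\<And>i. i \<in> I \<Longrightarrow> S i \<subseteq> A" "disjoint_family_on S I"
  shows "card {E. E \<subseteq> A \<and> (\<forall>i\<in>I. E \<inter> S i \<noteq> {})}
           = 2 ^ (card A - (\<Sum>i\<in>I. card (S i))) * (\<Prod>i\<in>I. 2 ^ card (S i) - 1)"
  using assms
proof (induction I arbitrary: A rule: finite_induct)
  case empty
  then show ?case by (simp add: card_Pow flip: Pow_def)
next
  case (insert j I A)
  let ?P = "\<lambda>E. \<forall>i\<in>I. E \<inter> S i \<noteq> {}"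
  have disjoint: "S i \<inter> S j = {}" if "i \<in> I" for i
    using insert.prems(3) insert.hyps(2) that unfolding disjoint_family_on_def by fastforce
  have subset: "S i \<subseteq> A - S j" if "i \<in> I" for i
    using insert.prems(2) disjoint that by blast
  have "{E. E \<subseteq> A \<and> (\<forall>i\<in>insert j I. E \<inter> S i \<noteq> {})}
        = {E. E \<subseteq> A \<and> E \<inter> S j \<noteq> {} \<and> ?P (E - S j)}"
    using disjoint by blast
  then have "card {E. E \<subseteq> A \<and> (\<forall>i\<in>insert j I. E \<inter> S i \<noteq> {})}
        = card {E. E \<subseteq> A \<and> E \<inter> S j \<noteq> {} \<and> ?P (E - S j)}"
    by simp
  also have "\<dots> = (2 ^ card (S j) - 1) * card {E. E \<subseteq> A - S j \<and> ?P E}"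
    by (rule card_subsets_meeting) (use insert.prems in auto)
  also have "card {E. E \<subseteq> A - S j \<and> ?P E}
        = 2 ^ (card (A - S j) - (\<Sum>i\<in>I. card (S i))) * (\<Prod>i\<in>I. 2 ^ card (S i) - 1)"
    using insert.prems(1,3) subset
    by (intro insert.IH) (auto intro: disjoint_family_on_mono)
  also have "card (A - S j) - (\<Sum>i\<in>I. card (S i)) = card A - (\<Sum>i\<in>insert j I. card (S i))"
    using insert.hyps insert.prems(1,2) rev_finite_subset[of A "S j"]
    by (simp add: card_Diff_subset)
  finally show ?case
    using insert.hyps by (simp add: mult_ac)
qed

lemma sum_card_disjoint_family_le:
  assumes "finite I" "finite A" "\<And>i. i \<in> I \<Longrightarrow> S i \<subseteq> A" "disjoint_family_on S I"
  shows "(\<Sum>i\<in>I. card (S i)) \<le> card A"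
proof -
  have "(\<Sum>i\<in>I. card (S i)) = card (\<Union>i\<in>I. S i)"
    using assms by (intro card_UN_disjoint'[symmetric]) (auto intro: rev_finite_subset)
  also have "\<dots> \<le> card A"
    using assms by (intro card_mono) auto
  finally show ?thesis .
qed

definition first_return :: "('a::linorder \<Rightarrow> 'a) \<Rightarrow> 'a \<Rightarrow> nat" where
  "first_return p t = (LEAST k. 0 < k \<and> (p ^^ k) t \<le> t)"

lemma rho_altdef: "rho p t = (\<lambda>i. (p ^^ i) t) ` {..<first_return p t}"
  unfolding rho_def first_return_def by auto

lemma lam_altdef: "lam p t = (inv p ^^ first_return (inv p) t) t"
  unfolding lam_def first_return_def ..

lemma first_return_exists:
  fixes p :: "'a::preorder \<Rightarrow> 'a"
  assumes "permutation p"
  shows "\<exists>k. 0 < k \<and> (p ^^ k) t \<le> t"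
proof -
  obtain n where "0 < n" "(p ^^ n) t = t"
    using permutation_self[OF assms] .
  then show ?thesis by (intro exI[of _ n]) simp
qed

lemma
  assumes "permutation p"
  shows first_return_pos: "0 < first_return p t"
    and funpow_first_return_le: "(p ^^ first_return p t) t \<le> t"
  using LeastI_ex[OF first_return_exists[OF assms, of t]] unfolding first_return_def by auto

lemma less_funpow_before_first_return:
  "0 < i \<Longrightarrow> i < first_return p t \<Longrightarrow> t < (p ^^ i) t"
  using not_less_Least[of i "\<lambda>k. 0 < k \<and> (p ^^ k) t \<le> t"]
  unfolding first_return_def by auto

lemma first_return_le: "0 < i \<Longrightarrow> (p ^^ i) t \<le> t \<Longrightarrow> first_return p t \<le> i"
  unfolding first_return_def by (rule Least_le) simp

lemma le_funpow_before_first_return: "i < first_return p t \<Longrightarrow> t \<le> (p ^^ i) t"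
  using less_funpow_before_first_return[of i p t] by (cases "i = 0") (auto simp: less_imp_le)

lemma le_of_mem_rho: "x \<in> rho p t \<Longrightarrow> t \<le> x"
  unfolding rho_altdef by (auto intro: le_funpow_before_first_return)

lemma rho_subset: "p permutes V \<Longrightarrow> t \<in> V \<Longrightarrow> rho p t \<subseteq> V"
  unfolding rho_altdef by (auto intro: permutes_in_funpow_image)

lemma funpow_first_return_eq_iff:
  assumes "permutation p"
  shows "(p ^^ first_return p t) t = t \<longleftrightarrow> (\<forall>n. t \<le> (p ^^ n) t)"
proof
  assume return: "(p ^^ first_return p t) t = t"
  show "\<forall>n. t \<le> (p ^^ n) t"
  proof
    fix n
    have "t \<le> (p ^^ (n mod first_return p t)) t"
      using first_return_pos[OF assms] by (intro le_funpow_before_first_return) simp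
    then show "t \<le> (p ^^ n) t"
      by (simp add: funpow_mod_eq[OF return])
  qed
next
  assume "\<forall>n. t \<le> (p ^^ n) t"
  then show "(p ^^ first_return p t) t = t"
    using funpow_first_return_le[OF assms] order_antisym by blast
qed

lemma funpow_split: "l \<le> m \<Longrightarrow> (p ^^ m) x = (p ^^ l) ((p ^^ (m - l)) x)"
  by (metis funpow_add comp_apply le_add_diff_inverse)

lemma inv_funpow_funpow:
  assumes "bij p" "l \<le> m"
  shows "(inv p ^^ l) ((p ^^ m) x) = (p ^^ (m - l)) x"
proof -
  have "(p ^^ m) x = (p ^^ l) ((p ^^ (m - l)) x)"
    using assms(2) by (rule funpow_split)
  then show ?thesis
    using inv_fn_o_fn_is_id[OF assms(1), of l] by (simp add: fun_eq_iff)
qed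

lemma inv_funpow_eq_funpow:
  assumes "permutation p"
  obtains n where "(inv p ^^ l) t = (p ^^ n) t"
proof -
  obtain P where P: "0 < P" "(p ^^ P) t = t"
    using permutation_self[OF assms] .
  have "(p ^^ (P * l)) t = t"
    using funpow_mod_eq[OF P(2), of "P * l"] by simp
  then have "(inv p ^^ l) t = (inv p ^^ l) ((p ^^ (P * l)) t)"
    by simp
  also have "\<dots> = (p ^^ (P * l - l)) t"
    using P(1) by (intro inv_funpow_funpow permutation_bijective assms) simp
  finally have "(inv p ^^ l) t = (p ^^ (P * l - l)) t" .
  then show thesis ..
qed

lemma forward_min_iff_backward_min:
  assumes "permutation p"
  shows "(\<forall>n. t \<le> (p ^^ n) t) \<longleftrightarrow> (\<forall>n. t \<le> (inv p ^^ n) t)"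
proof
  assume forward: "\<forall>n. t \<le> (p ^^ n) t"
  show "\<forall>n. t \<le> (inv p ^^ n) t"
  proof
    fix n
    obtain m where "(inv p ^^ n) t = (p ^^ m) t"
      using inv_funpow_eq_funpow[OF assms] .
    then show "t \<le> (inv p ^^ n) t"
      using forward by simp
  qed
next
  assume backward: "\<forall>n. t \<le> (inv p ^^ n) t"
  show "\<forall>n. t \<le> (p ^^ n) t"
  proof
    fix n
    obtain m where "(inv (inv p) ^^ n) t = (inv p ^^ m) t"
      using inv_funpow_eq_funpow[OF permutation_inverse[OF assms]] .
    moreover have "inv (inv p) = p"
      using assms by (simp add: inv_inv_eq permutation_bijective)
    ultimately show "t \<le> (p ^^ n) t"
      using backward by simp
  qed
qed

lemma lam_le: "permutation p \<Longrightarrow> lam p t \<le> t"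
  unfolding lam_altdef by (intro funpow_first_return_le permutation_inverse)

lemma lam_eq_self_iff: "permutation p \<Longrightarrow> lam p t = t \<longleftrightarrow> (\<forall>n. t \<le> (p ^^ n) t)"
  unfolding lam_altdef forward_min_iff_backward_min
  by (intro funpow_first_return_eq_iff permutation_inverse)

lemma lam_less_iff:
  assumes "permutation p"
  shows "lam p t < t \<longleftrightarrow> (\<exists>n. (p ^^ n) t < t)"
proof -
  have "lam p t < t \<longleftrightarrow> lam p t \<noteq> t"
    using lam_le[OF assms, of t] by (simp add: order.strict_iff_order)
  also have "\<dots> \<longleftrightarrow> \<not> (\<forall>n. t \<le> (p ^^ n) t)"
    using lam_eq_self_iff[OF assms] by simp
  finally show ?thesis
    by (simp add: not_le)
qed

lemma lam_apply:
  assumes "permutation p" "t < p t"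
  shows "lam p (p t) = t"
proof -
  have "inv p (p t) = t"
    using permutation_bijective[OF assms(1)] by (simp add: bij_is_inj)
  moreover from this have "first_return (inv p) (p t) \<le> 1"
    using assms(2) by (intro first_return_le) simp_all
  then have "first_return (inv p) (p t) = 1"
    using first_return_pos[OF permutation_inverse[OF assms(1)], of "p t"] by linarith
  ultimately show ?thesis
    unfolding lam_altdef by simp
qed

lemma rho_apply_subset:
  assumes "permutation p" "t < p t"
  shows "rho p (p t) \<subseteq> rho p t"
proof -
  define K where "K = first_return p t"
  have "K \<noteq> 1"
    using funpow_first_return_le[OF assms(1), of t] assms(2) unfolding K_def by auto
  then have "1 < K"
    using first_return_pos[OF assms(1), of t] unfolding K_def by linarith
  have "(p ^^ (K - 1)) (p t) = (p ^^ Suc (K - 1)) t"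
    by (simp only: funpow_Suc_right comp_apply)
  then have "(p ^^ (K - 1)) (p t) = (p ^^ K) t"
    using \<open>1 < K\<close> by simp
  then have "first_return p (p t) \<le> K - 1"
    using funpow_first_return_le[OF assms(1), of t] assms(2) \<open>1 < K\<close> unfolding K_def
    by (intro first_return_le) auto
  show ?thesis
  proof
    fix x
    assume "x \<in> rho p (p t)"
    then obtain i where "i < first_return p (p t)" "x = (p ^^ i) (p t)"
      unfolding rho_altdef by blast
    then have "Suc i < K" "x = (p ^^ Suc i) t"
      using \<open>first_return p (p t) \<le> K - 1\<close> by (simp_all only: funpow_Suc_right comp_apply)
    then show "x \<in> rho p t"
      unfolding rho_altdef K_def by blast
  qed
qed

lemma mem_rho_of_funpow_eq:
  assumes "inj p" "(p ^^ i) t = (p ^^ j) s" "i \<le> j" "j < first_return p s"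
  shows "t \<in> rho p s"
proof -
  have "(p ^^ i) t = (p ^^ i) ((p ^^ (j - i)) s)"
    using assms(2) funpow_split[OF assms(3)] by simp
  then have "t = (p ^^ (j - i)) s"
    using inj_fn[OF assms(1)] by (simp add: inj_eq)
  then show ?thesis
    unfolding rho_altdef using assms(4) by auto
qed

lemma lam_mem_rho:
  assumes "permutation p" "t \<in> rho p s" "t \<noteq> s"
  shows "lam p t \<in> rho p s"
proof -
  obtain d where d: "d < first_return p s" "t = (p ^^ d) s"
    using assms(2) unfolding rho_altdef by auto
  have "0 < d"
    using d assms(3) by (cases d) auto
  have "(inv p ^^ d) t = s"
    using inv_funpow_funpow[OF permutation_bijective[OF assms(1)], of d d] d(2) by simp
  moreover have "s < t"
    using less_funpow_before_first_return[OF \<open>0 < d\<close> d(1)] d(2) by simp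
  ultimately have L: "first_return (inv p) t \<le> d"
    using \<open>0 < d\<close> by (intro first_return_le) auto
  have "lam p t = (inv p ^^ first_return (inv p) t) ((p ^^ d) s)"
    using d(2) by (simp add: lam_altdef)
  also have "\<dots> = (p ^^ (d - first_return (inv p) t)) s"
    by (rule inv_funpow_funpow[OF permutation_bijective[OF assms(1)] L])
  finally have "lam p t = (p ^^ (d - first_return (inv p) t)) s" .
  then show ?thesis
    unfolding rho_altdef using d(1) by auto
qed

lemma eq_of_mem_rho_same_lam:
  assumes "permutation p" "t \<in> rho p s" "lam p t = lam p s" "lam p s < s"
  shows "t = s"
proof (rule ccontr)
  assume "t \<noteq> s"
  then have "s \<le> lam p t"
    using lam_mem_rho[OF assms(1,2)] le_of_mem_rho by blast
  then show False
    using assms(3,4) by simp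
qed

lemma rho_disjoint:
  assumes "permutation p" "lam p t < t" "lam p s < s" "lam p t = lam p s" "t \<noteq> s"
  shows "rho p t \<inter> rho p s = {}"
proof (rule ccontr)
  assume "rho p t \<inter> rho p s \<noteq> {}"
  then obtain i j where ij: "i < first_return p t" "j < first_return p s" "(p ^^ i) t = (p ^^ j) s"
    unfolding rho_altdef by auto
  have "inj p"
    using assms(1) by (simp add: bij_is_inj permutation_bijective)
  consider "i \<le> j" | "j \<le> i" by linarith
  then show False
  proof cases
    case 1
    then have "t \<in> rho p s" by (rule mem_rho_of_funpow_eq[OF \<open>inj p\<close> ij(3) _ ij(2)])
    then show False using eq_of_mem_rho_same_lam assms by blast
  next
    case 2
    then have "s \<in> rho p t" by (rule mem_rho_of_funpow_eq[OF \<open>inj p\<close> ij(3)[symmetric] _ ij(1)])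
    then show False using eq_of_mem_rho_same_lam assms by metis
  qed
qed

definition rho_edges :: "('a::linorder \<Rightarrow> 'a) \<Rightarrow> 'a \<Rightarrow> 'a set set" where
  "rho_edges w t = (\<lambda>x. {lam w t, x}) ` rho w t"

lemma card_rho_edges: "card (rho_edges w t) = card (rho w t)"
  unfolding rho_edges_def by (rule card_image) (auto simp: inj_on_def doubleton_eq_iff)

lemma meets_rho_edges_iff: "E \<inter> rho_edges w t \<noteq> {} \<longleftrightarrow> (\<exists>x\<in>rho w t. adjacent E (lam w t) x)"
  unfolding rho_edges_def adjacent_def by auto

locale finite_derangement =
  fixes V :: "'a::linorder set" and w :: "'a \<Rightarrow> 'a"
  assumes finite: "finite V" and derangement: "derangement V w"
begin

lemma permutes: "w permutes V"
  using derangement unfolding derangement_def by blast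

lemma permutation: "permutation w"
  using finite permutes by (rule permutes_imp_permutation)

lemma U_eq: "U V w = {t \<in> V. lam w t < t}"
  unfolding U_def lam_less_iff[OF permutation] ..

lemma lam_in: "t \<in> V \<Longrightarrow> lam w t \<in> V"
  unfolding lam_altdef using permutes_in_funpow_image[OF permutes_inv[OF permutes]] .

lemma rho_edges_subset:
  assumes "t \<in> U V w"
  shows "rho_edges w t \<subseteq> all_edges V"
proof
  fix e
  assume "e \<in> rho_edges w t"
  then obtain x where x: "x \<in> rho w t" "e = {lam w t, x}"
    unfolding rho_edges_def by blast
  have "t \<in> V" "lam w t < t"
    using assms unfolding U_eq by auto
  then have "lam w t \<noteq> x" "x \<in> V" "lam w t \<in> V"
    using le_of_mem_rho[OF x(1)] rho_subset[OF permutes] x(1) lam_in by auto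
  then show "e \<in> all_edges V"
    unfolding all_edges_def x(2) by simp
qed

lemma disjoint_family_rho_edges: "disjoint_family_on (rho_edges w) (U V w)"
  unfolding disjoint_family_on_def
proof (intro ballI impI, rule ccontr)
  fix t s
  assume t: "t \<in> U V w" and s: "s \<in> U V w" and "t \<noteq> s"
    and "rho_edges w t \<inter> rho_edges w s \<noteq> {}"
  then obtain x y where x: "x \<in> rho w t" and y: "y \<in> rho w s"
    and xy: "{lam w t, x} = {lam w s, y}"
    unfolding rho_edges_def by blast
  have "lam w t < x" "lam w s < y"
    using t s le_of_mem_rho[OF x] le_of_mem_rho[OF y] unfolding U_eq by auto
  then have "lam w t = lam w s" "x = y"
    using xy by (auto simp: doubleton_eq_iff)
  then show False
    using rho_disjoint[OF permutation _ _ _ \<open>t \<noteq> s\<close>] t s x y unfolding U_eq by blast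
qed

lemma rho_edges_apply_subset:
  assumes "t \<in> V" "t \<notin> U V w"
  shows "w t \<in> U V w" and "rho_edges w (w t) \<subseteq> rho_edges w t"
proof -
  have "lam w t = t"
    using assms U_eq lam_le[OF permutation, of t] by auto
  then have "t \<le> (w ^^ 1) t"
    using lam_eq_self_iff[OF permutation] by blast
  then have "t \<le> w t"
    by simp
  then have "t < w t"
    using derangement assms(1) unfolding derangement_def by (auto simp: order.order_iff_strict)
  then have "lam w (w t) = t"
    by (rule lam_apply[OF permutation])
  then show "w t \<in> U V w"
    using \<open>t < w t\<close> permutes_in_image[OF permutes] assms(1) unfolding U_eq by simp
  show "rho_edges w (w t) \<subseteq> rho_edges w t"
    using rho_apply_subset[OF permutation \<open>t < w t\<close>] \<open>lam w t = t\<close> \<open>lam w (w t) = t\<close>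
    unfolding rho_edges_def by auto
qed

lemma mem_derangement_set_iff:
  "w \<in> derangement_set V E \<longleftrightarrow> (\<forall>t\<in>U V w. E \<inter> rho_edges w t \<noteq> {})"
proof
  assume "w \<in> derangement_set V E"
  then show "\<forall>t\<in>U V w. E \<inter> rho_edges w t \<noteq> {}"
    unfolding derangement_set_def meets_rho_edges_iff U_def by auto
next
  assume meets: "\<forall>t\<in>U V w. E \<inter> rho_edges w t \<noteq> {}"
  have "E \<inter> rho_edges w t \<noteq> {}" if "t \<in> V" for t
  proof (cases "t \<in> U V w")
    case False
    with that rho_edges_apply_subset meets show ?thesis by blast
  qed (use meets in blast)
  then show "w \<in> derangement_set V E"
    unfolding derangement_set_def meets_rho_edges_iff[symmetric] using permutes by blast
qed

lemma freq_eq: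
  "freq V w = 2 ^ ((card V choose 2) - (\<Sum>t\<in>U V w. card (rho w t)))
                * (\<Prod>t\<in>U V w. 2 ^ card (rho w t) - 1)"
proof -
  have finite_U: "finite (U V w)" and finite_edges: "finite (all_edges V)"
    using finite unfolding U_def all_edges_def by auto
  have "freq V w = card {E. E \<subseteq> all_edges V \<and> (\<forall>t\<in>U V w. E \<inter> rho_edges w t \<noteq> {})}"
    unfolding freq_def simple_graph_def mem_derangement_set_iff ..
  also have "\<dots> = 2 ^ (card (all_edges V) - (\<Sum>t\<in>U V w. card (rho_edges w t)))
                   * (\<Prod>t\<in>U V w. 2 ^ card (rho_edges w t) - 1)"
    using finite_U finite_edges rho_edges_subset disjoint_family_rho_edges
    by (rule card_subsets_meeting_disjoint_family)
  finally show ?thesis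
    unfolding card_rho_edges all_edges_def n_subsets[OF finite] .
qed

lemma sum_card_rho_le: "(\<Sum>t\<in>U V w. card (rho w t)) \<le> card V choose 2"
  using sum_card_disjoint_family_le[OF _ _ rho_edges_subset disjoint_family_rho_edges] finite
  unfolding card_rho_edges all_edges_def n_subsets[OF finite]
  by (auto simp: U_def)

end

lemma prod_one_minus_inverse_power:
  fixes x :: "'b::field"
  assumes "x \<noteq> 0"
  shows "(\<Prod>i\<in>I. 1 - 1 / x ^ c i) = (\<Prod>i\<in>I. x ^ c i - 1) / x ^ (\<Sum>i\<in>I. c i)"
proof -
  have "(\<Prod>i\<in>I. 1 - 1 / x ^ c i) = (\<Prod>i\<in>I. (x ^ c i - 1) / x ^ c i)"
    using assms by (intro prod.cong) (simp_all add: field_simps)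
  also have "\<dots> = (\<Prod>i\<in>I. x ^ c i - 1) / x ^ (\<Sum>i\<in>I. c i)"
    by (simp add: prod_dividef power_sum)
  finally show ?thesis .
qed

theorem theorem3p5:
  fixes V :: "'a::linorder set" and w :: "'a \<Rightarrow> 'a"
  assumes "finite V" and "derangement V w"
  shows "real (freq V w) =
           (2::real) powi (int (card V choose 2) - int (\<Sum>t\<in>U V w. card (rho w t)))
           * (\<Prod>t\<in>U V w. (2::real) ^ card (rho w t) - 1)
       \<and> real (freq V w) =
           2 ^ (card V choose 2) * (\<Prod>t\<in>U V w. 1 - 1 / (2::real) ^ card (rho w t))
       \<and> rate V w = (\<Prod>t\<in>U V w. 1 - 1 / (2::real) ^ card (rho w t))"
proof -
  interpret finite_derangement V w
    using assms by unfold_locales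
  define N where "N = card V choose 2"
  define S where "S = (\<Sum>t\<in>U V w. card (rho w t))"
  define P where "P = (\<Prod>t\<in>U V w. (2::real) ^ card (rho w t) - 1)"
  have "S \<le> N"
    unfolding S_def N_def by (rule sum_card_rho_le)
  have freq: "real (freq V w) = 2 ^ (N - S) * P"
    unfolding freq_eq N_def S_def P_def by (simp add: of_nat_diff)
  define Q where "Q = (\<Prod>t\<in>U V w. 1 - 1 / (2::real) ^ card (rho w t))"
  have powi: "(2::real) powi (int N - int S) = 2 ^ (N - S)"
    using \<open>S \<le> N\<close> by (simp add: power_int_of_nat flip: of_nat_diff)
  have "2 ^ N * Q = 2 ^ N / 2 ^ S * P"
    by (simp add: Q_def prod_one_minus_inverse_power P_def S_def)
  also have "(2::real) ^ N / 2 ^ S = 2 ^ (N - S)"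
    using \<open>S \<le> N\<close> by (simp add: power_diff)
  finally have Q: "2 ^ N * Q = 2 ^ (N - S) * P" .
  show ?thesis
    unfolding rate_def freq powi N_def[symmetric] S_def[symmetric] P_def[symmetric] Q_def[symmetric]
    by (simp add: Q[symmetric])
qed

end
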